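(* For every $r>1$, every $\lambda\in(0,1)$, every measurable function $f$ on $\mathbb{R}^n$ and every $x\in\mathbb{R}^n$, $$Mf(x)\le \frac{r}{r-1}\lambda^{\frac{r-1}{r}}M_rf(x)+m_\lambda f(x).$$
   Context: $Mf(x)=\sup_{Q\ni x}\frac1{|Q|}\int_Q|f|$ is the Hardy–Littlewood maximal operator, with the supremum over cubes $Q$ containing $x$. For $r>0$, $M_rf:=M(|f|^r)^{1/r}$. For $\lambda\in(0,1)$, the local maximal operator is $$m_\lambda f(x)=\sup_{Q\ni x}(f\chi_Q)^*(\lambda|Q|),$$ where $$(f\chi_Q)^*(\lambda|Q|)=\inf\{\alpha>0:|\{y\in Q:|f(y)|>\alpha\}|\le\lambda|Q|\}$$ is the non-increasing rearrangement of $f\chi_Q$ evaluated at $\lambda|Q|$. *)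

theory Defs
  imports "HOL-Analysis.Analysis"
begin

definition is_cube :: "(real ^ 'n) set \<Rightarrow> bool" where
  "is_cube Q \<longleftrightarrow> (\<exists>a h. h > 0 \<and> Q = cbox a (a + h *\<^sub>R One))"

definition HL_max :: "(real ^ 'n \<Rightarrow> real) \<Rightarrow> real ^ 'n \<Rightarrow> ennreal" where
  "HL_max f x = (SUP Q \<in> {Q. is_cube Q \<and> x \<in> Q}.
      ennreal (1 / measure lebesgue Q) * (\<integral>\<^sup>+ y \<in> Q. ennreal \<bar>f y\<bar> \<partial>lebesgue))"

definition ennpow :: "ennreal \<Rightarrow> real \<Rightarrow> ennreal" where
  "ennpow a p = (if a = \<infinity> then \<infinity> else ennreal (enn2real a powr p))"

definition HL_max_r :: "real \<Rightarrow> (real ^ 'n \<Rightarrow> real) \<Rightarrow> real ^ 'n \<Rightarrow> ennreal" where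
  "HL_max_r r f x = ennpow (HL_max (\<lambda>y. \<bar>f y\<bar> powr r) x) (1 / r)"

text \<open>Non-increasing rearrangement of f restricted to Q, evaluated at t (inf of empty set = \<infinity>).\<close>
definition rearr_loc :: "(real ^ 'n \<Rightarrow> real) \<Rightarrow> (real ^ 'n) set \<Rightarrow> real \<Rightarrow> ennreal" where
  "rearr_loc f Q t = Inf {ennreal \<alpha> | \<alpha>. \<alpha> > 0 \<and>
      emeasure lebesgue {y \<in> Q. \<bar>f y\<bar> > \<alpha>} \<le> ennreal t}"

definition loc_max :: "real \<Rightarrow> (real ^ 'n \<Rightarrow> real) \<Rightarrow> real ^ 'n \<Rightarrow> ennreal" where
  "loc_max lam f x = (SUP Q \<in> {Q. is_cube Q \<and> x \<in> Q}. rearr_loc f Q (lam * measure lebesgue Q))"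

end

theory Submission
  imports Defs
begin

text \<open>
  Fix a cube \<open>Q \<ni> x\<close> and a level \<open>\<alpha>\<close> admissible in the definition of \<open>(f\<chi>\<^sub>Q)\<^sup>*(\<lambda>|Q|)\<close>,
  i.e. \<open>E = {y \<in> Q. \<alpha> < |f y|}\<close> has measure at most \<open>\<lambda>|Q|\<close>. Off \<open>E\<close> we have \<open>|f| \<le> \<alpha>\<close>; on \<open>E\<close>
  Young's inequality \<open>t \<le> t\<^sup>r / (r s\<^bsup>r-1\<^esup>) + (r - 1) s / r\<close> holds for every \<open>s > 0\<close>.
  Integrating and choosing \<open>s\<^sup>r = \<integral>\<^sub>Q |f|\<^sup>r / (\<lambda>|Q|)\<close> (this replaces Hoelder's inequality on \<open>E\<close>)
  gives \<open>avg\<^sub>Q |f| \<le> \<alpha> + \<lambda>\<^bsup>(r-1)/r\<^esup> (avg\<^sub>Q |f|\<^sup>r)\<^bsup>1/r\<^esup>\<close>. Taking the infimum over \<open>\<alpha>\<close> and the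
  supremum over \<open>Q\<close> proves the claim, even without the factor \<open>r/(r - 1) \<ge> 1\<close> and for every \<open>\<lambda> > 0\<close>.
\<close>

lemma Youngs_inequality_scaled:
  fixes a s r :: real
  assumes "0 \<le> a" "0 < s" "1 < r"
  shows "a \<le> a powr r / (r * s powr (r - 1)) + (r - 1) / r * s"
proof -
  have "a / s * 1 \<le> (a / s) powr r / r + 1 powr (r / (r - 1)) / (r / (r - 1))"
    by (rule Youngs_inequality) (use assms in \<open>auto simp: field_simps\<close>)
  also have "\<dots> = (a powr r / (r * s powr (r - 1)) + (r - 1) / r * s) / s"
    using assms by (simp add: powr_divide powr_diff field_simps)
  finally show ?thesis
    using assms by (simp add: divide_le_cancel)
qed

lemma set_nn_integral_abs_le_Young:
  fixes f :: "'a \<Rightarrow> real"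
  assumes f: "f \<in> borel_measurable M" and Q: "Q \<in> sets M"
    and "0 \<le> \<alpha>" "0 < s" "1 < r"
  defines "c\<^sub>1 \<equiv> 1 / (r * s powr (r - 1))" and "c\<^sub>2 \<equiv> (r - 1) / r * s"
  shows "(\<integral>\<^sup>+ y \<in> Q. ennreal \<bar>f y\<bar> \<partial>M)
    \<le> ennreal \<alpha> * emeasure M Q + ennreal c\<^sub>1 * (\<integral>\<^sup>+ y \<in> Q. ennreal (\<bar>f y\<bar> powr r) \<partial>M)
      + ennreal c\<^sub>2 * emeasure M {y \<in> Q. \<alpha> < \<bar>f y\<bar>}"
proof -
  define E where "E = {y \<in> Q. \<alpha> < \<bar>f y\<bar>}"
  have E: "E \<in> sets M"
    unfolding E_def using f Q by measurable
  have c: "0 \<le> c\<^sub>1" "0 \<le> c\<^sub>2"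
    using assms(4,5) by (simp_all add: c\<^sub>1_def c\<^sub>2_def)
  have pointwise: "\<bar>f y\<bar> * indicator Q y
      \<le> \<alpha> * indicator Q y + c\<^sub>1 * (\<bar>f y\<bar> powr r * indicator Q y) + c\<^sub>2 * indicator E y" for y
  proof (cases "y \<in> E")
    case True
    then have "\<bar>f y\<bar> \<le> c\<^sub>1 * \<bar>f y\<bar> powr r + c\<^sub>2"
      using Youngs_inequality_scaled[of "\<bar>f y\<bar>" s r] assms(4,5) by (simp add: c\<^sub>1_def c\<^sub>2_def)
    then show ?thesis
      using True \<open>0 \<le> \<alpha>\<close> by (simp add: E_def)
  qed (use c in \<open>auto simp: E_def indicator_def intro!: add_increasing2\<close>)
  have "(\<integral>\<^sup>+ y \<in> Q. ennreal \<bar>f y\<bar> \<partial>M)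
      \<le> (\<integral>\<^sup>+ y. ennreal \<alpha> * indicator Q y + ennreal c\<^sub>1 * (ennreal (\<bar>f y\<bar> powr r) * indicator Q y)
            + ennreal c\<^sub>2 * indicator E y \<partial>M)"
  proof (rule nn_integral_mono)
    fix y
    have "ennreal (\<bar>f y\<bar> * indicator Q y)
        \<le> ennreal (\<alpha> * indicator Q y + c\<^sub>1 * (\<bar>f y\<bar> powr r * indicator Q y) + c\<^sub>2 * indicator E y)"
      using pointwise by (rule ennreal_leI)
    then show "ennreal \<bar>f y\<bar> * indicator Q y
        \<le> ennreal \<alpha> * indicator Q y + ennreal c\<^sub>1 * (ennreal (\<bar>f y\<bar> powr r) * indicator Q y)
          + ennreal c\<^sub>2 * indicator E y"
      using c \<open>0 \<le> \<alpha>\<close> by (simp add: ennreal_plus ennreal_mult ennreal_indicator)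
  qed
  also have "\<dots> = ennreal \<alpha> * emeasure M Q + ennreal c\<^sub>1 * (\<integral>\<^sup>+ y \<in> Q. ennreal (\<bar>f y\<bar> powr r) \<partial>M)
      + ennreal c\<^sub>2 * emeasure M E"
    using f Q E by (simp add: nn_integral_add nn_integral_cmult)
  finally show ?thesis
    unfolding E_def .
qed

lemma ennpow_ennreal: "0 \<le> a \<Longrightarrow> ennpow (ennreal a) p = ennreal (a powr p)"
  by (simp add: ennpow_def)

lemma ennpow_mono:
  assumes "a \<le> b" "0 \<le> p"
  shows "ennpow a p \<le> ennpow b p"
proof (cases "b = \<infinity>")
  case False
  then have "a \<noteq> \<infinity>" "enn2real a \<le> enn2real b"
    using assms(1) by (auto simp: top_unique enn2real_mono top.not_eq_extremum)
  then show ?thesis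
    using False assms(2) by (simp add: ennpow_def ennreal_leI powr_mono2)
qed (simp add: ennpow_def)

lemma set_average_le_level_plus:
  fixes f :: "'a \<Rightarrow> real"
  assumes f: "f \<in> borel_measurable M" and Q: "Q \<in> sets M"
    and m: "emeasure M Q = ennreal m" "0 < m"
    and r: "1 < r" and lam: "0 < lam" and "0 \<le> \<alpha>"
    and level: "emeasure M {y \<in> Q. \<alpha> < \<bar>f y\<bar>} \<le> ennreal (lam * m)"
  shows "ennreal (1 / m) * (\<integral>\<^sup>+ y \<in> Q. ennreal \<bar>f y\<bar> \<partial>M)
    \<le> ennreal \<alpha> + ennreal (lam powr ((r - 1) / r))
        * ennpow (ennreal (1 / m) * (\<integral>\<^sup>+ y \<in> Q. ennreal (\<bar>f y\<bar> powr r) \<partial>M)) (1 / r)"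
proof -
  define I where "I = (\<integral>\<^sup>+ y \<in> Q. ennreal (\<bar>f y\<bar> powr r) \<partial>M)"
  consider "I = \<infinity>" | "I = 0" | b where "I = ennreal b" "0 < b"
    by (cases I rule: ennreal_cases) (auto simp: le_less)
  then show ?thesis
  proof cases
    case 1
    then show ?thesis
      using m lam by (simp add: I_def ennpow_def ennreal_mult_eq_top_iff)
  next
    case 2
    have "AE y in M. ennreal (\<bar>f y\<bar> powr r) * indicator Q y = 0"
      using 2 f Q by (simp add: I_def nn_integral_0_iff_AE)
    then have "AE y in M. ennreal \<bar>f y\<bar> * indicator Q y = 0"
      by eventually_elim (simp add: indicator_def)
    then have "(\<integral>\<^sup>+ y \<in> Q. ennreal \<bar>f y\<bar> \<partial>M) = 0"
      using f Q by (simp add: nn_integral_0_iff_AE)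
    then show ?thesis
      by simp
  next
    case (3 b)
    define s where "s = (b / (lam * m)) powr (1 / r)"
    define c\<^sub>1 where "c\<^sub>1 = 1 / (r * s powr (r - 1))"
    define c\<^sub>2 where "c\<^sub>2 = (r - 1) / r * s"
    have "0 < s"
      using 3 m lam by (simp add: s_def)
    then have c: "0 \<le> c\<^sub>1" "0 \<le> c\<^sub>2"
      using r by (simp_all add: c\<^sub>1_def c\<^sub>2_def)
    have "s powr r = b / (lam * m)"
      using 3 m lam r by (simp add: s_def powr_powr)
    then have "c\<^sub>1 * b = lam * m * s / r"
      using \<open>0 < s\<close> m lam r by (simp add: c\<^sub>1_def powr_diff field_simps)
    then have optimal: "c\<^sub>1 * b + c\<^sub>2 * (lam * m) = lam * m * s"
      using r by (simp add: c\<^sub>2_def field_simps)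
    have "s = (b / m) powr (1 / r) / lam powr (1 / r)"
      using 3 m lam by (simp add: s_def powr_divide powr_mult field_simps)
    moreover have "lam powr ((r - 1) / r) = lam / lam powr (1 / r)"
      using lam r by (simp add: powr_diff diff_divide_distrib)
    ultimately have lam_s: "lam * s = lam powr ((r - 1) / r) * (b / m) powr (1 / r)"
      by simp
    have "(\<integral>\<^sup>+ y \<in> Q. ennreal \<bar>f y\<bar> \<partial>M)
        \<le> ennreal \<alpha> * emeasure M Q + ennreal c\<^sub>1 * I + ennreal c\<^sub>2 * emeasure M {y \<in> Q. \<alpha> < \<bar>f y\<bar>}"
      using set_nn_integral_abs_le_Young[OF f Q \<open>0 \<le> \<alpha>\<close> \<open>0 < s\<close> r]
      by (simp add: I_def c\<^sub>1_def c\<^sub>2_def)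
    also have "\<dots> \<le> ennreal \<alpha> * ennreal m + ennreal c\<^sub>1 * ennreal b + ennreal c\<^sub>2 * ennreal (lam * m)"
      using m(1) 3(1) level by (intro add_mono mult_left_mono) auto
    also have "\<dots> = ennreal (\<alpha> * m + (c\<^sub>1 * b + c\<^sub>2 * (lam * m)))"
      using c \<open>0 \<le> \<alpha>\<close> m(2) lam 3(2) by (simp add: ennreal_plus ennreal_mult add.assoc)
    also have "\<dots> = ennreal (m * (\<alpha> + lam * s))"
      unfolding optimal by (simp add: algebra_simps)
    finally have "ennreal (1 / m) * (\<integral>\<^sup>+ y \<in> Q. ennreal \<bar>f y\<bar> \<partial>M) \<le> ennreal (\<alpha> + lam * s)"
      using m(2) \<open>0 \<le> \<alpha>\<close> lam \<open>0 < s\<close>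
      by (auto dest: mult_left_mono[of _ _ "ennreal (1 / m)"] simp flip: ennreal_mult)
    also have "\<dots> = ennreal \<alpha> + ennreal (lam powr ((r - 1) / r)) * ennpow (ennreal (1 / m) * I) (1 / r)"
      using 3 m(2) \<open>0 \<le> \<alpha>\<close> lam_s
      by (simp add: ennpow_ennreal ennreal_plus ennreal_mult flip: ennreal_mult)
    finally show ?thesis
      unfolding I_def .
  qed
qed

lemma ennreal_le_Inf_add:
  fixes x c :: ennreal
  assumes "\<And>a. a \<in> S \<Longrightarrow> x \<le> a + c"
  shows "x \<le> Inf S + c"
proof (cases "S = {}")
  case False
  have "continuous (at_right (Inf S)) (\<lambda>a. a + c)"
    by (intro continuous_intros)
  then have "Inf S + c = (INF a \<in> S. a + c)"
    using False by (intro continuous_at_Inf_mono) (auto simp: mono_def add_right_mono)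
  then show ?thesis
    using assms by (simp add: le_INF_iff)
qed simp

lemma set_average_le_rearr_loc_plus:
  fixes f :: "real ^ 'n \<Rightarrow> real"
  assumes f: "f \<in> borel_measurable lebesgue" and Q: "Q \<in> sets lebesgue"
    and m: "emeasure lebesgue Q = ennreal m" "0 < m"
    and r: "1 < r" and lam: "0 < lam"
  shows "ennreal (1 / m) * (\<integral>\<^sup>+ y \<in> Q. ennreal \<bar>f y\<bar> \<partial>lebesgue)
    \<le> rearr_loc f Q (lam * m) + ennreal (lam powr ((r - 1) / r))
        * ennpow (ennreal (1 / m) * (\<integral>\<^sup>+ y \<in> Q. ennreal (\<bar>f y\<bar> powr r) \<partial>lebesgue)) (1 / r)"
  unfolding rearr_loc_def
  by (rule ennreal_le_Inf_add)
     (auto intro!: set_average_le_level_plus[OF f Q m r lam])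

lemma is_cube_lmeasurable: "is_cube Q \<Longrightarrow> Q \<in> lmeasurable"
  by (auto simp: is_cube_def)

lemma is_cube_measure_pos:
  assumes "is_cube Q"
  shows "0 < measure lebesgue Q"
proof -
  obtain a h where "0 < h" "Q = cbox a (a + h *\<^sub>R One)"
    using assms by (auto simp: is_cube_def)
  then show ?thesis
    by (simp add: measure_completion content_pos_lt inner_add_left)
qed

theorem proposition2p1:
  fixes f :: "real ^ 'n \<Rightarrow> real" and x :: "real ^ 'n" and r lam :: real
  assumes "r > 1" and "0 < lam" and "lam < 1"
    and "f \<in> borel_measurable lebesgue"
  shows "HL_max f x \<le> ennreal (r / (r - 1) * lam powr ((r - 1) / r)) * HL_max_r r f x
           + loc_max lam f x"
  unfolding HL_max_def[of f x]
proof (rule SUP_least)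
  fix Q assume Q: "Q \<in> {Q. is_cube Q \<and> x \<in> Q}"
  define m where "m = measure lebesgue Q"
  have Q_sets: "Q \<in> sets lebesgue" and m: "emeasure lebesgue Q = ennreal m" "0 < m"
    using Q is_cube_lmeasurable[of Q] is_cube_measure_pos[of Q]
    by (auto simp: m_def emeasure_eq_measure2)
  have "ennreal (1 / m) * (\<integral>\<^sup>+ y \<in> Q. ennreal \<bar>f y\<bar> \<partial>lebesgue)
      \<le> rearr_loc f Q (lam * m) + ennreal (lam powr ((r - 1) / r))
        * ennpow (ennreal (1 / m) * (\<integral>\<^sup>+ y \<in> Q. ennreal (\<bar>f y\<bar> powr r) \<partial>lebesgue)) (1 / r)"
    using set_average_le_rearr_loc_plus[OF assms(4) Q_sets m assms(1,2)] .
  also have "\<dots> \<le> loc_max lam f x + ennreal (r / (r - 1) * lam powr ((r - 1) / r)) * HL_max_r r f x"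
  proof (intro add_mono mult_mono)
    show "rearr_loc f Q (lam * m) \<le> loc_max lam f x"
      unfolding loc_max_def m_def using Q by (auto intro: SUP_upper)
    show "ennreal (lam powr ((r - 1) / r)) \<le> ennreal (r / (r - 1) * lam powr ((r - 1) / r))"
      using assms(1) by (intro ennreal_leI) (simp add: field_simps)
    show "ennpow (ennreal (1 / m) * (\<integral>\<^sup>+ y \<in> Q. ennreal (\<bar>f y\<bar> powr r) \<partial>lebesgue)) (1 / r)
        \<le> HL_max_r r f x"
      unfolding HL_max_r_def HL_max_def m_def
      using Q assms(1) by (auto intro!: ennpow_mono SUP_upper2)
  qed simp_all
  finally show "ennreal (1 / measure lebesgue Q) * (\<integral>\<^sup>+ y \<in> Q. ennreal \<bar>f y\<bar> \<partial>lebesgue)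
      \<le> ennreal (r / (r - 1) * lam powr ((r - 1) / r)) * HL_max_r r f x + loc_max lam f x"
    by (simp add: m_def add.commute)
qed

end
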